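(* Let $\theta\in[0,1)$ and $\alpha_1,\dots,\alpha_T>0$, $\beta_1,\dots,\beta_T>0$ with $\sum_t\alpha_t=\sum_t\beta_t=1$, and let $\gamma_t=\beta_t/\alpha_t$. For $\eta_1\ge0$ define $$\Upsilon_{\mathrm{market}}(\eta_1)=1+\theta^2\Big(\sum_{t=1}^T\frac{\beta_t^2}{\alpha_t}-1\Big)+\eta_1\sum_{t=1}^T\frac{\alpha_t(1-\theta(1-\gamma_t))^2(1-\gamma_t)}{1+\eta_1\gamma_t}.$$ Then $\Upsilon_{\mathrm{market}}$ is decreasing on $[0,\frac{\theta}{1-\theta}]$ and increasing on $[\frac{\theta}{1-\theta},\infty)$, and $$\Upsilon_{\mathrm{market}}(0)=1+\theta^2\Big(\sum_t\frac{\beta_t^2}{\alpha_t}-1\Big),\quad \Upsilon_{\mathrm{market}}\Big(\frac{\theta}{1-\theta}\Big)=1,\quad \lim_{\eta_1\to\infty}\Upsilon_{\mathrm{market}}(\eta_1)=1+(1-\theta)^2\Big(\sum_{t=1}^T\frac{\alpha_t^2}{\beta_t}-1\Big).$$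
   Context: $\Upsilon_{\mathrm{market}}(\eta_1)$ is the ratio of the expected cost of the separable schedule $(\alpha_t(1-\theta)+\beta_t\theta)\mathbf{x}_0$ to the optimal expected cost when the liquidated portfolio $\mathbf{x}_0$ equals the index portfolio $\mathbf{w}_1$, with $\eta_1=\bar\psi_{\mathrm{f},1}\mathbf{w}_1^\top\bar{\boldsymbol{\Psi}}_{\mathrm{id}}^{-1}\mathbf{w}_1$ the ratio of index-fund to single-stock liquidity along $\mathbf{w}_1$. *)

theory Defs
  imports Complex_Main
begin

definition upsilon_market ::
  "nat \<Rightarrow> (nat \<Rightarrow> real) \<Rightarrow> (nat \<Rightarrow> real) \<Rightarrow> real \<Rightarrow> real \<Rightarrow> real" where
  "upsilon_market T \<alpha> \<beta> \<theta> \<eta> =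
     1 + \<theta>\<^sup>2 * ((\<Sum>t=1..T. (\<beta> t)\<^sup>2 / \<alpha> t) - 1)
     + \<eta> * (\<Sum>t=1..T. \<alpha> t * (1 - \<theta> * (1 - \<beta> t / \<alpha> t))\<^sup>2 * (1 - \<beta> t / \<alpha> t)
                         / (1 + \<eta> * (\<beta> t / \<alpha> t)))"

end

theory Submission
  imports Defs "HOL-Analysis.Convex"
begin

text \<open>
  Write \<open>\<gamma>\<^sub>t = \<beta>\<^sub>t / \<alpha>\<^sub>t\<close> and \<open>\<kappa> = \<theta> / (1 - \<theta>)\<close>. Since \<open>1 - \<theta> (1 - \<gamma>) = (1 - \<theta>) (1 + \<kappa> \<gamma>)\<close>
  and \<open>y / (1 + y \<gamma>) - x / (1 + x \<gamma>) = (y - x) / ((1 + x \<gamma>) (1 + y \<gamma>))\<close>, one gets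
  \<open>\<Upsilon>(y) - \<Upsilon>(x) = (1 - \<theta>)\<^sup>2 (y - x) \<Sum>\<^sub>t \<alpha>\<^sub>t (1 - \<gamma>\<^sub>t) f(\<gamma>\<^sub>t)\<close> with
  \<open>f(\<gamma>) = (1 + \<kappa> \<gamma>)\<^sup>2 / ((1 + x \<gamma>) (1 + y \<gamma>))\<close>.
  The weights are balanced, \<open>\<Sum>\<^sub>t \<alpha>\<^sub>t (1 - \<gamma>\<^sub>t) = \<Sum>\<^sub>t (\<alpha>\<^sub>t - \<beta>\<^sub>t) = 0\<close>, so the sum equals
  \<open>\<Sum>\<^sub>t \<alpha>\<^sub>t (1 - \<gamma>\<^sub>t) (f(\<gamma>\<^sub>t) - f(1))\<close>, whose terms are all \<open>\<le> 0\<close> if \<open>f\<close> is increasing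
  (i.e. \<open>x, y \<le> \<kappa>\<close>) and all \<open>\<ge> 0\<close> if \<open>f\<close> is decreasing (i.e. \<open>x, y \<ge> \<kappa>\<close>).
\<close>

lemma sum_balanced_mono_on_nonpos:
  fixes a g :: "'i \<Rightarrow> real" and f :: "real \<Rightarrow> real"
  assumes balanced: "(\<Sum>i\<in>I. a i * (1 - g i)) = 0"
    and a_nonneg: "\<And>i. i \<in> I \<Longrightarrow> 0 \<le> a i"
    and g_in: "\<And>i. i \<in> I \<Longrightarrow> g i \<in> S" and "1 \<in> S"
    and f_mono: "mono_on S f"
  shows "(\<Sum>i\<in>I. a i * (1 - g i) * f (g i)) \<le> 0"
proof -
  have "(\<Sum>i\<in>I. a i * (1 - g i) * f (g i))
      = (\<Sum>i\<in>I. a i * ((1 - g i) * (f (g i) - f 1))) + f 1 * (\<Sum>i\<in>I. a i * (1 - g i))"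
    by (simp add: sum_distrib_left sum.distrib[symmetric] algebra_simps)
  also have "\<dots> = (\<Sum>i\<in>I. a i * ((1 - g i) * (f (g i) - f 1)))"
    using balanced by simp
  also have "\<dots> \<le> 0"
  proof (rule sum_nonpos)
    fix i assume i: "i \<in> I"
    have "(1 - g i) * (f (g i) - f 1) \<le> 0"
    proof (cases "g i \<le> 1")
      case True
      then have "f (g i) \<le> f 1" using monotone_onD[OF f_mono g_in[OF i] \<open>1 \<in> S\<close>] by simp
      with True show ?thesis by (simp add: mult_nonneg_nonpos)
    next
      case False
      then have "f 1 \<le> f (g i)" using monotone_onD[OF f_mono \<open>1 \<in> S\<close> g_in[OF i]] by simp
      with False show ?thesis by (simp add: mult_nonpos_nonneg)
    qed
    with a_nonneg[OF i] show "a i * ((1 - g i) * (f (g i) - f 1)) \<le> 0"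
      by (rule mult_nonneg_nonpos)
  qed
  finally show ?thesis .
qed

lemma sum_balanced_antimono_on_nonneg:
  fixes a g :: "'i \<Rightarrow> real" and f :: "real \<Rightarrow> real"
  assumes "(\<Sum>i\<in>I. a i * (1 - g i)) = 0"
    and "\<And>i. i \<in> I \<Longrightarrow> 0 \<le> a i" and "\<And>i. i \<in> I \<Longrightarrow> g i \<in> S" and "1 \<in> S"
    and "antimono_on S f"
  shows "(\<Sum>i\<in>I. a i * (1 - g i) * f (g i)) \<ge> 0"
proof -
  have "mono_on S (\<lambda>z. - f z)"
    using \<open>antimono_on S f\<close> by (auto simp: monotone_on_def)
  from sum_balanced_mono_on_nonpos[OF assms(1-4) this] show ?thesis
    by (simp add: sum_negf)
qed

lemma antimono_on_mul:
  fixes f g :: "'a::ord \<Rightarrow> 'b::ordered_semiring"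
  assumes "antimono_on S f" "antimono_on S g" "f \<in> S \<rightarrow> {0..}" "g \<in> S \<rightarrow> {0..}"
  shows "antimono_on S (\<lambda>x. f x * g x)"
  using assms by (auto simp: Pi_iff monotone_on_def intro!: mult_mono)

lemma frac_linear_diff:
  fixes e x g h :: real
  assumes "1 + x * g \<noteq> 0" "1 + x * h \<noteq> 0"
  shows "(1 + e * g) / (1 + x * g) - (1 + e * h) / (1 + x * h)
       = (e - x) * (g - h) / ((1 + x * g) * (1 + x * h))"
  using assms by (simp add: divide_simps) (simp add: algebra_simps)

lemma mono_on_frac_linear:
  fixes e x :: real
  assumes "0 \<le> x" "x \<le> e"
  shows "mono_on {0..} (\<lambda>g. (1 + e * g) / (1 + x * g))"
proof (rule mono_onI)
  fix g h :: real assume "g \<in> {0..}" "h \<in> {0..}" "g \<le> h"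
  with assms have pos: "0 < 1 + x * g" "0 < 1 + x * h" by (auto intro: add_pos_nonneg)
  have "(1 + e * g) / (1 + x * g) - (1 + e * h) / (1 + x * h)
      = (e - x) * (g - h) / ((1 + x * g) * (1 + x * h))"
    using pos by (intro frac_linear_diff) auto
  also have "\<dots> \<le> 0"
    using assms \<open>g \<le> h\<close> pos by (intro divide_nonpos_pos mult_nonneg_nonpos mult_pos_pos) auto
  finally show "(1 + e * g) / (1 + x * g) \<le> (1 + e * h) / (1 + x * h)" by simp
qed

lemma antimono_on_frac_linear:
  fixes e x :: real
  assumes "0 \<le> e" "e \<le> x"
  shows "antimono_on {0..} (\<lambda>g. (1 + e * g) / (1 + x * g))"
proof (rule monotone_onI)
  fix g h :: real assume "g \<in> {0..}" "h \<in> {0..}" "g \<le> h"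
  with assms have pos: "0 < 1 + x * g" "0 < 1 + x * h" by (auto intro: add_pos_nonneg)
  have "0 \<le> (e - x) * (g - h) / ((1 + x * g) * (1 + x * h))"
    using assms \<open>g \<le> h\<close> pos by (intro divide_nonneg_pos mult_nonpos_nonpos mult_pos_pos) auto
  also have "\<dots> = (1 + e * g) / (1 + x * g) - (1 + e * h) / (1 + x * h)"
    using pos by (intro frac_linear_diff[symmetric]) auto
  finally show "(1 + e * h) / (1 + x * h) \<le> (1 + e * g) / (1 + x * g)" by simp
qed

lemma frac_linear_nonneg:
  fixes e x :: real
  assumes "0 \<le> e" "0 \<le> x"
  shows "(\<lambda>g. (1 + e * g) / (1 + x * g)) \<in> {0..} \<rightarrow> {0..}"
  using assms by (auto intro!: divide_nonneg_nonneg add_nonneg_nonneg)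

lemma threshold_factor:
  fixes \<theta> g :: real
  assumes "\<theta> < 1"
  shows "1 - \<theta> * (1 - g) = (1 - \<theta>) * (1 + \<theta> / (1 - \<theta>) * g)"
  using assms by (simp add: field_simps)

lemma market_term_diff:
  fixes a g \<theta> x y :: real
  assumes "\<theta> < 1" "0 \<le> g" "0 \<le> x" "0 \<le> y"
  shows "y * (a * (1 - \<theta> * (1 - g))\<^sup>2 * (1 - g) / (1 + y * g))
           - x * (a * (1 - \<theta> * (1 - g))\<^sup>2 * (1 - g) / (1 + x * g))
       = (1 - \<theta>)\<^sup>2 * (y - x) * (a * (1 - g) *
           ((1 + \<theta> / (1 - \<theta>) * g) / (1 + x * g) * ((1 + \<theta> / (1 - \<theta>) * g) / (1 + y * g))))"
proof -
  from assms have "0 < 1 + x * g" "0 < 1 + y * g" by (auto intro: add_pos_nonneg)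
  then show ?thesis
    unfolding threshold_factor[OF assms(1)]
    by (simp add: divide_simps power2_eq_square) (simp add: algebra_simps)
qed

lemma market_term_at_threshold:
  fixes a b \<theta> :: real
  assumes "0 < a" "0 \<le> b" "0 \<le> \<theta>" "\<theta> < 1"
  shows "\<theta> / (1 - \<theta>) * (a * (1 - \<theta> * (1 - b / a))\<^sup>2 * (1 - b / a) / (1 + \<theta> / (1 - \<theta>) * (b / a)))
       = \<theta> * (a - b) - \<theta>\<^sup>2 * (b\<^sup>2 / a - 2 * b + a)"
proof -
  from assms have "0 < 1 + \<theta> / (1 - \<theta>) * (b / a)" by (auto intro!: add_pos_nonneg)
  then show ?thesis
    unfolding threshold_factor[OF assms(4)] using assms
    by (simp add: divide_simps power2_eq_square) (simp add: algebra_simps)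
qed

lemma market_term_limit:
  fixes a b \<theta> :: real
  assumes "0 < a" "0 < b"
  shows "a * (1 - \<theta> * (1 - b / a))\<^sup>2 * (1 - b / a) / (b / a)
       = (1 - \<theta>)\<^sup>2 * (a\<^sup>2 / b - a) + 2 * \<theta> * (1 - \<theta>) * (a - b) + \<theta>\<^sup>2 * (b - b\<^sup>2 / a)"
  using assms by (simp add: divide_simps power2_eq_square) (simp add: algebra_simps)

lemma tendsto_mult_frac_linear_at_top:
  fixes k g :: real
  assumes "0 < g"
  shows "((\<lambda>\<eta>. \<eta> * (k / (1 + \<eta> * g))) \<longlongrightarrow> k / g) at_top"
proof -
  have "((\<lambda>\<eta>. k / (inverse \<eta> + g)) \<longlongrightarrow> k / (0 + g)) at_top"
    using assms by (intro tendsto_intros tendsto_inverse_0_at_top filterlim_ident) auto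
  moreover have "\<forall>\<^sub>F \<eta> in at_top. k / (inverse \<eta> + g) = \<eta> * (k / (1 + \<eta> * g))"
    using eventually_gt_at_top[of 0]
  proof eventually_elim
    case (elim \<eta>)
    with assms have "0 < 1 + \<eta> * g" by (auto intro: add_pos_nonneg)
    with elim show ?case by (simp add: field_simps)
  qed
  ultimately show ?thesis by (simp add: tendsto_cong)
qed

locale trading_schedules =
  fixes T :: nat and \<alpha> \<beta> :: "nat \<Rightarrow> real"
  assumes alpha_pos: "\<And>t. t \<in> {1..T} \<Longrightarrow> 0 < \<alpha> t"
    and beta_pos: "\<And>t. t \<in> {1..T} \<Longrightarrow> 0 < \<beta> t"
    and sum_alpha: "(\<Sum>t=1..T. \<alpha> t) = 1"
    and sum_beta: "(\<Sum>t=1..T. \<beta> t) = 1"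
begin

abbreviation ratio :: "nat \<Rightarrow> real" where
  "ratio t \<equiv> \<beta> t / \<alpha> t"

lemma ratio_nonneg: "t \<in> {1..T} \<Longrightarrow> 0 \<le> ratio t"
  using alpha_pos beta_pos by (simp add: less_imp_le)

lemma sum_ratio_balanced: "(\<Sum>t=1..T. \<alpha> t * (1 - ratio t)) = 0"
proof -
  have "(\<Sum>t=1..T. \<alpha> t * (1 - ratio t)) = (\<Sum>t=1..T. \<alpha> t - \<beta> t)"
  proof (rule sum.cong[OF refl])
    fix t assume "t \<in> {1..T}"
    with alpha_pos[of t] show "\<alpha> t * (1 - ratio t) = \<alpha> t - \<beta> t"
      by (simp add: field_simps)
  qed
  also have "\<dots> = 0"
    unfolding sum_subtractf sum_alpha sum_beta by simp
  finally show ?thesis .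
qed

lemma upsilon_market_diff:
  assumes "\<theta> < 1" "0 \<le> x" "0 \<le> y"
  shows "upsilon_market T \<alpha> \<beta> \<theta> y - upsilon_market T \<alpha> \<beta> \<theta> x
       = (1 - \<theta>)\<^sup>2 * (y - x) * (\<Sum>t=1..T. \<alpha> t * (1 - ratio t) *
           ((1 + \<theta> / (1 - \<theta>) * ratio t) / (1 + x * ratio t) *
            ((1 + \<theta> / (1 - \<theta>) * ratio t) / (1 + y * ratio t))))"
proof -
  have "upsilon_market T \<alpha> \<beta> \<theta> y - upsilon_market T \<alpha> \<beta> \<theta> x
      = (\<Sum>t=1..T. y * (\<alpha> t * (1 - \<theta> * (1 - ratio t))\<^sup>2 * (1 - ratio t) / (1 + y * ratio t))
                    - x * (\<alpha> t * (1 - \<theta> * (1 - ratio t))\<^sup>2 * (1 - ratio t) / (1 + x * ratio t)))"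
    by (simp add: upsilon_market_def sum_distrib_left sum_subtractf)
  also have "\<dots> = (\<Sum>t=1..T. (1 - \<theta>)\<^sup>2 * (y - x) * (\<alpha> t * (1 - ratio t) *
           ((1 + \<theta> / (1 - \<theta>) * ratio t) / (1 + x * ratio t) *
            ((1 + \<theta> / (1 - \<theta>) * ratio t) / (1 + y * ratio t)))))"
    using assms by (intro sum.cong refl market_term_diff ratio_nonneg)
  finally show ?thesis
    by (simp add: sum_distrib_left)
qed

lemma upsilon_market_antimono_on:
  assumes "0 \<le> \<theta>" "\<theta> < 1"
  shows "antimono_on {0..\<theta> / (1 - \<theta>)} (upsilon_market T \<alpha> \<beta> \<theta>)"
proof (rule monotone_onI)
  fix x y assume x: "x \<in> {0..\<theta> / (1 - \<theta>)}" and y: "y \<in> {0..\<theta> / (1 - \<theta>)}" and "x \<le> y"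
  let ?f = "\<lambda>g. (1 + \<theta> / (1 - \<theta>) * g) / (1 + x * g) * ((1 + \<theta> / (1 - \<theta>) * g) / (1 + y * g))"
  have "mono_on {0..} ?f"
    using x y assms
    by (intro mono_on_mul mono_on_frac_linear frac_linear_nonneg) auto
  then have "(\<Sum>t=1..T. \<alpha> t * (1 - ratio t) * ?f (ratio t)) \<le> 0"
    using alpha_pos ratio_nonneg
    by (intro sum_balanced_mono_on_nonpos[OF sum_ratio_balanced]) (auto simp: less_imp_le)
  with \<open>x \<le> y\<close> have "(1 - \<theta>)\<^sup>2 * (y - x) * (\<Sum>t=1..T. \<alpha> t * (1 - ratio t) * ?f (ratio t)) \<le> 0"
    by (simp add: mult_nonneg_nonpos)
  then show "upsilon_market T \<alpha> \<beta> \<theta> y \<le> upsilon_market T \<alpha> \<beta> \<theta> x"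
    using upsilon_market_diff[of \<theta> x y] assms x y by simp
qed

lemma upsilon_market_mono_on:
  assumes "0 \<le> \<theta>" "\<theta> < 1"
  shows "mono_on {\<theta> / (1 - \<theta>)..} (upsilon_market T \<alpha> \<beta> \<theta>)"
proof (rule mono_onI)
  fix x y assume x: "x \<in> {\<theta> / (1 - \<theta>)..}" and y: "y \<in> {\<theta> / (1 - \<theta>)..}" and "x \<le> y"
  have threshold_nonneg: "0 \<le> \<theta> / (1 - \<theta>)" using assms by simp
  with x y have "0 \<le> x" "0 \<le> y" by auto
  let ?f = "\<lambda>g. (1 + \<theta> / (1 - \<theta>) * g) / (1 + x * g) * ((1 + \<theta> / (1 - \<theta>) * g) / (1 + y * g))"
  have "antimono_on {0..} ?f"
    using x y threshold_nonneg
    by (intro antimono_on_mul antimono_on_frac_linear frac_linear_nonneg) auto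
  then have "0 \<le> (\<Sum>t=1..T. \<alpha> t * (1 - ratio t) * ?f (ratio t))"
    using alpha_pos ratio_nonneg
    by (intro sum_balanced_antimono_on_nonneg[OF sum_ratio_balanced]) (auto simp: less_imp_le)
  with \<open>x \<le> y\<close> have "0 \<le> (1 - \<theta>)\<^sup>2 * (y - x) * (\<Sum>t=1..T. \<alpha> t * (1 - ratio t) * ?f (ratio t))"
    by simp
  then show "upsilon_market T \<alpha> \<beta> \<theta> x \<le> upsilon_market T \<alpha> \<beta> \<theta> y"
    using upsilon_market_diff[of \<theta> x y] \<open>0 \<le> x\<close> \<open>0 \<le> y\<close> assms by simp
qed

lemma upsilon_market_at_threshold:
  assumes "0 \<le> \<theta>" "\<theta> < 1"
  shows "upsilon_market T \<alpha> \<beta> \<theta> (\<theta> / (1 - \<theta>)) = 1"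
proof -
  have "\<theta> / (1 - \<theta>) * (\<Sum>t=1..T. \<alpha> t * (1 - \<theta> * (1 - ratio t))\<^sup>2 * (1 - ratio t)
                                   / (1 + \<theta> / (1 - \<theta>) * ratio t))
      = (\<Sum>t=1..T. \<theta> * (\<alpha> t - \<beta> t) - \<theta>\<^sup>2 * ((\<beta> t)\<^sup>2 / \<alpha> t - 2 * \<beta> t + \<alpha> t))"
    unfolding sum_distrib_left using alpha_pos beta_pos assms
    by (intro sum.cong refl market_term_at_threshold) (auto simp: less_imp_le)
  also have "\<dots> = \<theta> * ((\<Sum>t=1..T. \<alpha> t) - (\<Sum>t=1..T. \<beta> t))
      - \<theta>\<^sup>2 * ((\<Sum>t=1..T. (\<beta> t)\<^sup>2 / \<alpha> t) - 2 * (\<Sum>t=1..T. \<beta> t) + (\<Sum>t=1..T. \<alpha> t))"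
    by (simp add: sum_subtractf sum.distrib sum_distrib_left right_diff_distrib distrib_left)
  also have "\<dots> = - \<theta>\<^sup>2 * ((\<Sum>t=1..T. (\<beta> t)\<^sup>2 / \<alpha> t) - 1)"
    unfolding sum_alpha sum_beta by (simp add: algebra_simps)
  finally show ?thesis
    by (simp add: upsilon_market_def)
qed

lemma upsilon_market_tendsto_at_top:
  "(upsilon_market T \<alpha> \<beta> \<theta> \<longlongrightarrow> 1 + (1 - \<theta>)\<^sup>2 * ((\<Sum>t=1..T. (\<alpha> t)\<^sup>2 / \<beta> t) - 1)) at_top"
proof -
  define C where "C = 1 + \<theta>\<^sup>2 * ((\<Sum>t=1..T. (\<beta> t)\<^sup>2 / \<alpha> t) - 1)"
  define K where "K t = \<alpha> t * (1 - \<theta> * (1 - ratio t))\<^sup>2 * (1 - ratio t)" for t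
  have limit_value: "C + (\<Sum>t=1..T. K t / ratio t)
      = 1 + (1 - \<theta>)\<^sup>2 * ((\<Sum>t=1..T. (\<alpha> t)\<^sup>2 / \<beta> t) - 1)"
  proof -
    have "(\<Sum>t=1..T. K t / ratio t)
        = (\<Sum>t=1..T. (1 - \<theta>)\<^sup>2 * ((\<alpha> t)\<^sup>2 / \<beta> t - \<alpha> t) + 2 * \<theta> * (1 - \<theta>) * (\<alpha> t - \<beta> t)
                      + \<theta>\<^sup>2 * (\<beta> t - (\<beta> t)\<^sup>2 / \<alpha> t))"
      unfolding K_def using alpha_pos beta_pos by (intro sum.cong refl market_term_limit) auto
    also have "\<dots> = (1 - \<theta>)\<^sup>2 * ((\<Sum>t=1..T. (\<alpha> t)\<^sup>2 / \<beta> t) - (\<Sum>t=1..T. \<alpha> t))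
        + 2 * \<theta> * (1 - \<theta>) * ((\<Sum>t=1..T. \<alpha> t) - (\<Sum>t=1..T. \<beta> t))
        + \<theta>\<^sup>2 * ((\<Sum>t=1..T. \<beta> t) - (\<Sum>t=1..T. (\<beta> t)\<^sup>2 / \<alpha> t))"
      by (simp add: sum_subtractf sum.distrib sum_distrib_left right_diff_distrib distrib_left)
    also have "\<dots> = (1 - \<theta>)\<^sup>2 * ((\<Sum>t=1..T. (\<alpha> t)\<^sup>2 / \<beta> t) - 1)
                    - \<theta>\<^sup>2 * ((\<Sum>t=1..T. (\<beta> t)\<^sup>2 / \<alpha> t) - 1)"
      unfolding sum_alpha sum_beta by (simp add: algebra_simps)
    finally show ?thesis
      by (simp add: C_def)
  qed
  have "upsilon_market T \<alpha> \<beta> \<theta> = (\<lambda>\<eta>. C + (\<Sum>t=1..T. \<eta> * (K t / (1 + \<eta> * ratio t))))"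
    by (simp add: fun_eq_iff upsilon_market_def C_def K_def sum_distrib_left)
  then show ?thesis
    unfolding limit_value[symmetric] using alpha_pos beta_pos
    by (simp only:) (intro tendsto_add tendsto_const tendsto_sum tendsto_mult_frac_linear_at_top, simp)
qed

end

theorem mainTheorem9:
  fixes T :: nat and \<alpha> \<beta> :: "nat \<Rightarrow> real" and \<theta> :: real
  assumes "0 \<le> \<theta>" and "\<theta> < 1"
    and "\<And>t. t \<in> {1..T} \<Longrightarrow> \<alpha> t > 0"
    and "\<And>t. t \<in> {1..T} \<Longrightarrow> \<beta> t > 0"
    and "(\<Sum>t=1..T. \<alpha> t) = 1" and "(\<Sum>t=1..T. \<beta> t) = 1"
  shows "(\<forall>x\<in>{0..\<theta>/(1-\<theta>)}. \<forall>y\<in>{0..\<theta>/(1-\<theta>)}. x \<le> y \<longrightarrow>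
            upsilon_market T \<alpha> \<beta> \<theta> y \<le> upsilon_market T \<alpha> \<beta> \<theta> x) \<and>
      (\<forall>x\<in>{\<theta>/(1-\<theta>)..}. \<forall>y\<in>{\<theta>/(1-\<theta>)..}. x \<le> y \<longrightarrow>
            upsilon_market T \<alpha> \<beta> \<theta> x \<le> upsilon_market T \<alpha> \<beta> \<theta> y) \<and>
      upsilon_market T \<alpha> \<beta> \<theta> 0 = 1 + \<theta>\<^sup>2 * ((\<Sum>t=1..T. (\<beta> t)\<^sup>2 / \<alpha> t) - 1) \<and>
      upsilon_market T \<alpha> \<beta> \<theta> (\<theta>/(1-\<theta>)) = 1 \<and>
      ((\<lambda>\<eta>. upsilon_market T \<alpha> \<beta> \<theta> \<eta>) \<longlongrightarrow>
            1 + (1-\<theta>)\<^sup>2 * ((\<Sum>t=1..T. (\<alpha> t)\<^sup>2 / \<beta> t) - 1)) at_top"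
proof -
  interpret trading_schedules T \<alpha> \<beta>
    using assms(3-6) by unfold_locales
  have "upsilon_market T \<alpha> \<beta> \<theta> 0 = 1 + \<theta>\<^sup>2 * ((\<Sum>t=1..T. (\<beta> t)\<^sup>2 / \<alpha> t) - 1)"
    by (simp add: upsilon_market_def)
  then show ?thesis
    using upsilon_market_antimono_on[OF assms(1,2)] upsilon_market_mono_on[OF assms(1,2)]
      upsilon_market_at_threshold[OF assms(1,2)] upsilon_market_tendsto_at_top[of \<theta>]
    unfolding monotone_on_def by blast
qed

end
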